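(* Let $k\ge 6$ be an even integer. Then for every integer $n\ge 0$, $$p_{S_k}(n)=(-1)^n\sum_{\substack{c\in\mathcal C_{P_k}\\ |c|=n}}(-1)^{\ell(c)}.$$
   Context: A composition is an ordered finite sequence of positive integers (including the empty one); $|c|$ is the sum of parts and $\ell(c)$ the number of parts; $\mathcal C_T$ is the set of compositions all of whose parts lie in $T$. For $k\ge3$, $P_k:=\{\,m((k-2)m\pm(k-4))/2 : m\in\mathbb N\,\}$ (the positive extended $k$-gonal numbers). For $k\ge5$, $S_k:=\{n\in\mathbb N: n\equiv 0,1,-1 \pmod{k-2}\}$. For $S\subseteq\mathbb N$, $p_S(n)$ is the number of partitions of $n$ all of whose parts lie in $S$ (with $p_S(0)=1$). *)

theory Defs
  imports Main "HOL-Library.Multiset"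
begin

definition compositions :: "nat set \<Rightarrow> nat \<Rightarrow> nat list set" where
  "compositions T n = {c. (\<forall>x\<in>set c. x > 0 \<and> x \<in> T) \<and> sum_list c = n}"

definition gonal :: "nat \<Rightarrow> nat set" where
  "gonal k = {n. n > 0 \<and> (\<exists>m::nat. m \<ge> 1 \<and>
      (2 * int n = int m * ((int k - 2) * int m + (int k - 4)) \<or>
       2 * int n = int m * ((int k - 2) * int m - (int k - 4))))}"

definition Sset :: "nat \<Rightarrow> nat set" where
  "Sset k = {n. n > 0 \<and> (n mod (k - 2) = 0 \<or> n mod (k - 2) = 1
                          \<or> (n + 1) mod (k - 2) = 0)}"

definition part_count :: "nat set \<Rightarrow> nat \<Rightarrow> nat" where
  "part_count S n = card {M :: nat multiset. (\<forall>x\<in>#M. x > 0 \<and> x \<in> S) \<and> sum_mset M = n}"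

end

theory Submission
  imports Defs "HOL-Computational_Algebra.Formal_Power_Series"
begin

text \<open>Put r = k - 2 and t(m) = r m(m-1)/2 + m for integers m; the values t(m) with m \<noteq> 0 are
  the extended k-gonal numbers. Both sides of the identity have generating functions inverse to
  D(x) = \<Sum>_m (-1)^t(m) x^t(m). For compositions this is the first-part recursion, read at -x.
  For partitions, the Jacobi triple product with q = x^r and z = -x gives
  \<Prod>_(j\<ge>0) (1 - x^(rj+1)) (1 - x^(rj+r-1)) (1 - x^(rj+r)) = \<Sum>_m (-1)^m x^t(m),
  which is D(x) because t(m) and m have the same parity when r is even, and the exponents on
  the left are exactly the elements of S_k. The triple product is only needed modulo x^(N+1):
  Cauchy's q-binomial theorem expands \<Prod>_(j<2N) (x^(rN) - x^(rj+1)) with Gaussian coefficients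
  in q = x^r, and after multiplication by (q;q)_N each of these becomes 1 modulo a power of x
  high enough for the terms that matter.\<close>

section \<open>Polygonal numbers\<close>

text \<open>For r = k - 2 this is m((k-2)m - (k-4))/2, and its value at -m is m((k-2)m + (k-4))/2.\<close>

definition polygonal :: "int \<Rightarrow> int \<Rightarrow> int" where
  "polygonal r m = r * (m * (m - 1) div 2) + m"

lemma double_polygonal: "2 * polygonal r m = m * (r * m - (r - 2))"
proof -
  have "2 * (m * (m - 1) div 2) = m * (m - 1)" by simp
  then show ?thesis unfolding polygonal_def by (simp add: algebra_simps)
qed

lemma abs_le_polygonal:
  assumes "2 \<le> r" shows "\<bar>m\<bar> \<le> polygonal r m"
proof (cases "0 \<le> m")
  case True
  then have "0 \<le> m * (m - 1)" by (cases "m = 0") auto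
  then show ?thesis using True assms unfolding polygonal_def by simp
next
  case False
  define j where "j = - m"
  have "r * 1 \<le> r * j" using False assms unfolding j_def by (intro mult_left_mono) auto
  then have "j * 2 \<le> j * (r * j + (r - 2))" using False assms unfolding j_def
    by (intro mult_left_mono) auto
  also have "\<dots> = 2 * polygonal r m" unfolding double_polygonal j_def by (simp add: algebra_simps)
  finally show ?thesis using False unfolding j_def by simp
qed

lemma inj_polygonal:
  assumes "3 \<le> r" shows "inj (polygonal r)"
proof
  fix m m' assume eq: "polygonal r m = polygonal r m'"
  have "(m - m') * (r * (m + m' - 1) + 2) = 2 * polygonal r m - 2 * polygonal r m'"
    unfolding double_polygonal by (simp add: algebra_simps)
  then have "m = m' \<or> r * (m + m' - 1) + 2 = 0" using eq by simp
  moreover have "r * (m + m' - 1) + 2 \<noteq> 0"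
  proof
    assume "r * (m + m' - 1) + 2 = 0"
    then have "r * (m + m' - 1) = - 2" by linarith
    then have "r dvd 2" by (metis dvd_minus_iff dvd_triv_left)
    then show False using assms zdvd_imp_le by fastforce
  qed
  ultimately show "m = m'" by blast
qed

lemma even_polygonal_iff: "even r \<Longrightarrow> even (polygonal r m) \<longleftrightarrow> even m"
  unfolding polygonal_def by auto

lemma gonal_eq_polygonal: "gonal k = {d. 0 < d \<and> int d \<in> range (polygonal (int k - 2))}"
proof (intro equalityI subsetI; clarsimp)
  fix d assume "d \<in> gonal k"
  then obtain m :: nat where "0 < d"
    "2 * int d = int m * ((int k - 2) * int m + (int k - 4)) \<or>
     2 * int d = int m * ((int k - 2) * int m - (int k - 4))"
    unfolding gonal_def by auto
  then have "2 * int d = 2 * polygonal (int k - 2) (- int m) \<or> 2 * int d = 2 * polygonal (int k - 2) (int m)"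
    unfolding double_polygonal by (auto simp: algebra_simps)
  then show "0 < d \<and> int d \<in> range (polygonal (int k - 2))" using \<open>0 < d\<close> by auto
next
  fix d m assume d: "0 < d" "int d = polygonal (int k - 2) m"
  then have "m \<noteq> 0" by (auto simp: polygonal_def)
  define j where "j = nat \<bar>m\<bar>"
  have j: "1 \<le> j" "int j = \<bar>m\<bar>" using \<open>m \<noteq> 0\<close> unfolding j_def by auto
  have "2 * int d = int j * ((int k - 2) * int j + (int k - 4)) \<or>
        2 * int d = int j * ((int k - 2) * int j - (int k - 4))"
    using d(2) double_polygonal[of "int k - 2" m] j(2) by (cases "0 < m") (simp_all add: algebra_simps)
  then show "d \<in> gonal k" unfolding gonal_def using d j by blast
qed

section \<open>Compositions\<close>

lemma finite_compositions: "finite (compositions T n)"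
proof (rule finite_subset)
  show "compositions T n \<subseteq> {xs. set xs \<subseteq> {1..n} \<and> length xs \<le> n}"
  proof
    fix c assume c: "c \<in> compositions T n"
    then have pos: "\<forall>x\<in>set c. 0 < x" and sum: "sum_list c = n"
      unfolding compositions_def by auto
    have "length c \<le> sum_list c" using pos by (induction c) (auto simp: Suc_le_eq)
    then show "c \<in> {xs. set xs \<subseteq> {1..n} \<and> length xs \<le> n}"
      using pos sum member_le_sum_list[of _ c] by (auto simp: Suc_le_eq)
  qed
qed (rule finite_lists_length_le, simp)

lemma compositions_0: "compositions T 0 = {[]}"
proof -
  have "c = []" if "\<forall>x\<in>set c. 0 < x" "\<forall>x\<in>set c. x = 0" for c :: "nat list"
    using that by (cases c) auto
  then show ?thesis unfolding compositions_def by (auto simp: sum_list_eq_0_iff)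
qed

lemma compositions_by_first_part:
  assumes "0 < n"
  shows "compositions T n = (\<Union>p\<in>{p\<in>{1..n}. p \<in> T}. (#) p ` compositions T (n - p))"
proof (intro equalityI subsetI)
  fix c assume c: "c \<in> compositions T n"
  then obtain p c' where "c = p # c'" using assms unfolding compositions_def by (cases c) auto
  then show "c \<in> (\<Union>p\<in>{p\<in>{1..n}. p \<in> T}. (#) p ` compositions T (n - p))"
    using c unfolding compositions_def by (auto simp: Suc_le_eq)
qed (auto simp: compositions_def)

definition signed_compositions :: "nat set \<Rightarrow> nat \<Rightarrow> int" where
  "signed_compositions T n = (\<Sum>c\<in>compositions T n. (-1) ^ length c)"

lemma signed_compositions_0 [simp]: "signed_compositions T 0 = 1"
  unfolding signed_compositions_def compositions_0 by simp

lemma signed_compositions_rec: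
  assumes "0 < n"
  shows "signed_compositions T n = - (\<Sum>p\<in>{p\<in>{1..n}. p \<in> T}. signed_compositions T (n - p))"
proof -
  have "signed_compositions T n =
      (\<Sum>p\<in>{p\<in>{1..n}. p \<in> T}. \<Sum>c\<in>(#) p ` compositions T (n - p). (-1) ^ length c)"
    unfolding signed_compositions_def compositions_by_first_part[OF assms]
    by (rule sum.UNION_disjoint) (auto simp: finite_compositions)
  also have "\<dots> = (\<Sum>p\<in>{p\<in>{1..n}. p \<in> T}. - signed_compositions T (n - p))"
  proof (rule sum.cong[OF refl])
    fix p
    have "(\<Sum>c\<in>(#) p ` compositions T (n - p). (-1::int) ^ length c)
        = (\<Sum>c\<in>compositions T (n - p). (-1) ^ length (p # c))"
      by (rule sum.reindex_cong[of "(#) p"]) (auto simp: inj_on_def)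
    then show "(\<Sum>c\<in>(#) p ` compositions T (n - p). (-1) ^ length c) = - signed_compositions T (n - p)"
      unfolding signed_compositions_def by (simp add: sum_negf)
  qed
  finally show ?thesis by (simp add: sum_negf)
qed

lemma signed_compositions_fps_inverse:
  "Abs_fps (\<lambda>n. if n = 0 \<or> n \<in> T then (-1) ^ n else 0) *
   Abs_fps (\<lambda>n. (-1) ^ n * signed_compositions T n) = (1 :: int fps)"
proof (rule fps_ext)
  fix n
  let ?D = "Abs_fps (\<lambda>n. if n = 0 \<or> n \<in> T then (-1) ^ n else 0) :: int fps"
  let ?V = "Abs_fps (\<lambda>n. (-1) ^ n * signed_compositions T n)"
  show "fps_nth (?D * ?V) n = fps_nth 1 n"
  proof (cases "n = 0")
    case False
    have "{0..n} = insert 0 {1..n}" by auto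
    then have "fps_nth (?D * ?V) n = fps_nth ?V n + (\<Sum>i\<in>{1..n}. fps_nth ?D i * fps_nth ?V (n - i))"
      unfolding fps_mult_nth by simp
    also have "(\<Sum>i\<in>{1..n}. fps_nth ?D i * fps_nth ?V (n - i))
        = (\<Sum>i\<in>{1..n}. if i \<in> T then (-1) ^ n * signed_compositions T (n - i) else 0)"
    proof (intro sum.cong refl)
      fix i assume "i \<in> {1..n}"
      then have "(-1) ^ i * (-1) ^ (n - i) = ((-1) ^ n :: int)" by (simp flip: power_add)
      then show "fps_nth ?D i * fps_nth ?V (n - i) = (if i \<in> T then (-1) ^ n * signed_compositions T (n - i) else 0)"
        using \<open>i \<in> {1..n}\<close> by (simp add: mult.assoc[symmetric])
    qed
    also have "\<dots> = (-1) ^ n * (\<Sum>p\<in>{p\<in>{1..n}. p \<in> T}. signed_compositions T (n - p))"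
      unfolding sum_distrib_left by (rule sum.inter_filter[symmetric]) simp
    finally show ?thesis using signed_compositions_rec[of n T] False by simp
  qed simp
qed

section \<open>Partitions\<close>

definition partitions_in :: "nat set \<Rightarrow> nat \<Rightarrow> nat multiset set" where
  "partitions_in A n = {M. set_mset M \<subseteq> A \<and> sum_mset M = n}"

definition partition_fps :: "nat set \<Rightarrow> int fps" where
  "partition_fps A = Abs_fps (\<lambda>n. int (card (partitions_in A n)))"

lemma mem_le_sum_mset: "x \<in># M \<Longrightarrow> x \<le> sum_mset (M :: nat multiset)"
proof -
  assume "x \<in># M"
  then obtain M' where "M = add_mset x M'" by (metis multi_member_split)
  then show ?thesis by simp
qed

lemma size_le_sum_mset: "0 \<notin># M \<Longrightarrow> size M \<le> sum_mset (M :: nat multiset)"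
proof (induction M)
  case (add x M) then show ?case by (cases x) auto
qed simp

lemma finite_partitions_in:
  assumes "finite A" "0 \<notin> A" shows "finite (partitions_in A n)"
proof (rule finite_subset)
  show "partitions_in A n \<subseteq> (\<Union>s\<le>n. multisets_of_size A s)"
    using size_le_sum_mset assms(2)
    unfolding partitions_in_def multisets_of_size_def by auto
qed (use assms in auto)

lemma partitions_in_insert:
  assumes "a \<notin> A" "a \<le> n"
  shows "partitions_in (insert a A) n =
    partitions_in A n \<union> add_mset a ` partitions_in (insert a A) (n - a)"
proof (intro equalityI subsetI)
  fix M assume M: "M \<in> partitions_in (insert a A) n"
  show "M \<in> partitions_in A n \<union> add_mset a ` partitions_in (insert a A) (n - a)"
  proof (cases "a \<in># M")
    case True
    then obtain M' where M': "M = add_mset a M'" by (metis multi_member_split)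
    then have "M' \<in> partitions_in (insert a A) (n - a)" using M unfolding partitions_in_def by auto
    then show ?thesis using M' by auto
  next
    case False
    then show ?thesis using M unfolding partitions_in_def by auto
  qed
next
  fix M assume "M \<in> partitions_in A n \<union> add_mset a ` partitions_in (insert a A) (n - a)"
  then show "M \<in> partitions_in (insert a A) n" using assms unfolding partitions_in_def by auto
qed

lemma partitions_in_insert_large:
  assumes "n < a"
  shows "partitions_in (insert a A) n = partitions_in A n"
proof (intro equalityI subsetI)
  fix M assume M: "M \<in> partitions_in (insert a A) n"
  then have "a \<notin># M" using assms mem_le_sum_mset unfolding partitions_in_def by fastforce
  then show "M \<in> partitions_in A n" using M unfolding partitions_in_def by auto
qed (auto simp: partitions_in_def)

lemma card_partitions_in_insert:
  assumes "a \<notin> A" "0 < a" "finite A" "0 \<notin> A"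
  shows "card (partitions_in (insert a A) n) =
    card (partitions_in A n) + (if a \<le> n then card (partitions_in (insert a A) (n - a)) else 0)"
proof (cases "a \<le> n")
  case True
  have fin: "finite (partitions_in A n)" "finite (partitions_in (insert a A) (n - a))"
    using assms finite_partitions_in[of A n] finite_partitions_in[of "insert a A" "n - a"] by auto
  have disj: "partitions_in A n \<inter> add_mset a ` partitions_in (insert a A) (n - a) = {}"
  proof (rule ccontr)
    assume "\<not> ?thesis"
    then obtain M where "add_mset a M \<in> partitions_in A n" by auto
    then show False using assms(1) unfolding partitions_in_def by auto
  qed
  have "card (partitions_in (insert a A) n) =
      card (partitions_in A n) + card (add_mset a ` partitions_in (insert a A) (n - a))"
    unfolding partitions_in_insert[OF assms(1) True] using fin disj by (intro card_Un_disjoint) auto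
  also have "card (add_mset a ` partitions_in (insert a A) (n - a)) = card (partitions_in (insert a A) (n - a))"
    by (rule card_image) (auto simp: inj_on_def)
  finally show ?thesis using True by simp
next
  case False
  then show ?thesis using partitions_in_insert_large[of n a A] by simp
qed

lemma partition_fps_inverse:
  assumes "finite A" "0 \<notin> A"
  shows "(\<Prod>s\<in>A. 1 - fps_X ^ s) * partition_fps A = 1"
  using assms
proof (induction A rule: finite_induct)
  case empty
  have "partitions_in {} n = (if n = 0 then {{#}} else {})" for n
    unfolding partitions_in_def by auto
  then show ?case unfolding partition_fps_def by (intro fps_ext) simp
next
  case (insert a A)
  have step: "(1 - fps_X ^ a) * partition_fps (insert a A) = partition_fps A"
    using card_partitions_in_insert[of a A] insert
    by (intro fps_ext) (simp add: left_diff_distrib fps_X_power_mult_nth partition_fps_def)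
  have "(\<Prod>s\<in>insert a A. 1 - fps_X ^ s) * partition_fps (insert a A) =
      (\<Prod>s\<in>A. 1 - fps_X ^ s) * ((1 - fps_X ^ a) * partition_fps (insert a A))"
    unfolding prod.insert[OF insert(1,2)] by (simp only: ac_simps)
  also have "\<dots> = 1" unfolding step using insert by simp
  finally show ?case .
qed

lemma part_count_eq_card_partitions_in:
  assumes "0 \<notin> S" "d \<le> b"
  shows "part_count S d = card (partitions_in {s \<in> S. s \<le> b} d)"
proof -
  have "{M. (\<forall>x\<in>#M. 0 < x \<and> x \<in> S) \<and> sum_mset M = d} = partitions_in {s \<in> S. s \<le> b} d"
  proof (intro equalityI subsetI)
    fix M assume M: "M \<in> {M. (\<forall>x\<in>#M. 0 < x \<and> x \<in> S) \<and> sum_mset M = d}"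
    then have "\<forall>x\<in>#M. x \<le> b" using mem_le_sum_mset assms(2) by fastforce
    then show "M \<in> partitions_in {s \<in> S. s \<le> b} d" using M unfolding partitions_in_def by auto
  next
    fix M assume "M \<in> partitions_in {s \<in> S. s \<le> b} d"
    then show "M \<in> {M. (\<forall>x\<in>#M. 0 < x \<and> x \<in> S) \<and> sum_mset M = d}"
      using assms(1) unfolding partitions_in_def by (auto intro: gr0I)
  qed
  then show ?thesis unfolding part_count_def by simp
qed

section \<open>Gaussian binomial coefficients\<close>

fun qbinom :: "'a::comm_ring_1 \<Rightarrow> nat \<Rightarrow> nat \<Rightarrow> 'a" where
  "qbinom q 0 k = (if k = 0 then 1 else 0)"
| "qbinom q (Suc n) 0 = 1"
| "qbinom q (Suc n) (Suc k) = qbinom q n k + q ^ Suc k * qbinom q n (Suc k)"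

lemma qbinom_eq_0: "n < k \<Longrightarrow> qbinom q n k = 0"
proof (induction n arbitrary: k)
  case (Suc n) then show ?case by (cases k) auto
qed simp

lemma qbinom_0_right [simp]: "qbinom q n 0 = 1"
  by (cases n) auto

lemma Suc_choose_two: "Suc i choose 2 = (i choose 2) + i"
  by (simp add: numeral_2_eq_2 choose_one)

theorem q_binomial_theorem:
  fixes y w q :: "'a::comm_ring_1"
  shows "(\<Prod>j<n. y + w * q ^ j) = (\<Sum>i\<le>n. qbinom q n i * q ^ (i choose 2) * w ^ i * y ^ (n - i))"
proof (induction n arbitrary: w)
  case 0 then show ?case by (simp add: numeral_2_eq_2)
next
  case (Suc n)
  define f where "f i = qbinom q n i * q ^ (Suc i choose 2) * w ^ Suc i * y ^ (n - i)" for i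
  define g where "g i = qbinom q n (Suc i) * q ^ (Suc (Suc i) choose 2) * w ^ Suc i * y ^ (n - i)" for i
  have "(\<Prod>j<Suc n. y + w * q ^ j) = (y + w) * (\<Prod>j<n. y + (w * q) * q ^ j)"
    by (subst prod.lessThan_Suc_shift) (simp add: mult.assoc)
  also have "\<dots> = (y + w) * (\<Sum>i\<le>n. qbinom q n i * q ^ (Suc i choose 2) * w ^ i * y ^ (n - i))"
    unfolding Suc by (intro arg_cong[where f = "\<lambda>s. (y + w) * s"] sum.cong refl)
      (simp add: Suc_choose_two power_add power_mult_distrib mult_ac)
  also have "\<dots> = (\<Sum>i\<le>n. f i) + (y ^ Suc n + (\<Sum>i<n. g i))"
  proof -
    have "w * (\<Sum>i\<le>n. qbinom q n i * q ^ (Suc i choose 2) * w ^ i * y ^ (n - i)) = (\<Sum>i\<le>n. f i)"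
      unfolding f_def sum_distrib_left by (intro sum.cong refl) (simp add: mult_ac)
    moreover have "y * (\<Sum>i\<le>n. qbinom q n i * q ^ (Suc i choose 2) * w ^ i * y ^ (n - i))
        = (\<Sum>i\<le>n. qbinom q n i * q ^ (Suc i choose 2) * w ^ i * y ^ (Suc n - i))"
      unfolding sum_distrib_left by (intro sum.cong refl) (auto simp: mult_ac Suc_diff_le)
    moreover have "\<dots> = y ^ Suc n + (\<Sum>i<n. g i)"
      unfolding g_def by (subst sum.atMost_shift) (simp add: numeral_2_eq_2)
    ultimately show ?thesis by (simp add: distrib_right)
  qed
  also have "\<dots> = y ^ Suc n + (\<Sum>i\<le>n. f i + g i)"
    by (simp add: sum.distrib lessThan_Suc_atMost[symmetric] g_def qbinom_eq_0)
  also have "\<dots> = (\<Sum>i\<le>Suc n. qbinom q (Suc n) i * q ^ (i choose 2) * w ^ i * y ^ (Suc n - i))"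
    unfolding sum.atMost_Suc_shift f_def g_def
    by (simp add: algebra_simps Suc_choose_two[of "Suc _"] power_add binomial_eq_0)
  finally show ?case .
qed

definition q_pochhammer :: "'a::comm_ring_1 \<Rightarrow> nat \<Rightarrow> 'a" where
  "q_pochhammer q n = (\<Prod>j<n. 1 - q ^ Suc j)"

lemma q_pochhammer_0 [simp]: "q_pochhammer q 0 = 1"
  unfolding q_pochhammer_def by simp

lemma q_pochhammer_Suc: "q_pochhammer q (Suc n) = q_pochhammer q n * (1 - q ^ Suc n)"
  unfolding q_pochhammer_def by simp

lemma q_pochhammer_split:
  "m \<le> n \<Longrightarrow> q_pochhammer q n = q_pochhammer q m * (\<Prod>j\<in>{m..<n}. 1 - q ^ Suc j)"
  unfolding q_pochhammer_def by (metis atLeast0LessThan prod.atLeastLessThan_concat zero_le)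

lemma qbinom_mult_q_pochhammer:
  "k \<le> n \<Longrightarrow> qbinom q n k * q_pochhammer q k * q_pochhammer q (n - k) = q_pochhammer q n"
proof (induction n arbitrary: k)
  case (Suc n)
  show ?case
  proof (cases k)
    case (Suc k')
    then have "k' \<le> n" using Suc.prems by simp
    have "qbinom q n k' * q_pochhammer q (Suc k') * q_pochhammer q (n - k') =
        (qbinom q n k' * q_pochhammer q k' * q_pochhammer q (n - k')) * (1 - q ^ Suc k')"
      unfolding q_pochhammer_Suc by (simp only: ac_simps)
    then have first: "qbinom q n k' * q_pochhammer q (Suc k') * q_pochhammer q (n - k') =
        q_pochhammer q n * (1 - q ^ Suc k')"
      using Suc.IH[OF \<open>k' \<le> n\<close>] by simp
    have second: "qbinom q n (Suc k') * q_pochhammer q (Suc k') * q_pochhammer q (n - k') =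
        q_pochhammer q n * (1 - q ^ (n - k'))"
    proof (cases "Suc k' \<le> n")
      case True
      then have "n - k' = Suc (n - Suc k')" by simp
      then have "qbinom q n (Suc k') * q_pochhammer q (Suc k') * q_pochhammer q (n - k') =
          (qbinom q n (Suc k') * q_pochhammer q (Suc k') * q_pochhammer q (n - Suc k')) * (1 - q ^ (n - k'))"
        by (simp only: q_pochhammer_Suc ac_simps)
      then show ?thesis using Suc.IH[OF True] by simp
    qed (simp add: qbinom_eq_0)
    have "qbinom q (Suc n) k * q_pochhammer q k * q_pochhammer q (Suc n - k)
        = q_pochhammer q n * (1 - q ^ Suc k') + q ^ Suc k' * (q_pochhammer q n * (1 - q ^ (n - k')))"
      unfolding Suc first[symmetric] second[symmetric] by (simp add: algebra_simps)
    also have "\<dots> = q_pochhammer q n * (1 - q ^ (Suc k' + (n - k')))"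
      by (simp add: algebra_simps power_add)
    finally show ?thesis using \<open>k' \<le> n\<close> by (simp add: q_pochhammer_Suc)
  qed simp
qed simp

lemma q_pochhammer_neq_0_mono:
  fixes q :: "'a::idom"
  shows "q_pochhammer q n \<noteq> 0 \<Longrightarrow> m \<le> n \<Longrightarrow> q_pochhammer q m \<noteq> 0"
  using q_pochhammer_split[of m n q] by auto

lemma qbinom_symmetric:
  fixes q :: "'a::idom"
  assumes "q_pochhammer q n \<noteq> 0" "k \<le> n"
  shows "qbinom q n (n - k) = qbinom q n k"
proof -
  have "qbinom q n (n - k) * (q_pochhammer q k * q_pochhammer q (n - k)) =
      qbinom q n k * (q_pochhammer q k * q_pochhammer q (n - k))"
    using qbinom_mult_q_pochhammer[of k n q] qbinom_mult_q_pochhammer[of "n - k" n q] assms(2)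
    by (simp add: mult_ac)
  moreover have "q_pochhammer q k * q_pochhammer q (n - k) \<noteq> 0"
    using q_pochhammer_neq_0_mono[OF assms(1)] assms(2) by simp
  ultimately show ?thesis by simp
qed

lemma q_pochhammer_fps_X_power_neq_0:
  assumes "0 < r" shows "q_pochhammer (fps_X ^ r :: 'a::idom fps) n \<noteq> 0"
proof -
  have "fps_nth (1 - (fps_X ^ r :: 'a fps) ^ Suc j) 0 = 1" for j
    using assms by (simp add: power_mult[symmetric] fps_X_power_nth)
  then have "1 - (fps_X ^ r :: 'a fps) ^ Suc j \<noteq> 0" for j
    by (metis fps_zero_nth zero_neq_one)
  then show ?thesis unfolding q_pochhammer_def prod_zero_iff[OF finite_lessThan] by blast
qed

section \<open>Truncated power series\<close>

lemma fps_cutoff_mult_cong: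
  assumes "fps_cutoff t a = fps_cutoff t a'" "fps_cutoff t b = fps_cutoff t b'"
  shows "fps_cutoff t (a * b) = fps_cutoff t (a' * b')"
  using assms unfolding fps_cutoff_eq_fps_cutoff_iff fps_mult_nth by auto

lemma fps_cutoff_sum_cong:
  "(\<And>i. i \<in> A \<Longrightarrow> fps_cutoff t (f i) = fps_cutoff t (g i)) \<Longrightarrow>
    fps_cutoff t (sum f A) = fps_cutoff t (sum g A)"
  unfolding fps_cutoff_eq_fps_cutoff_iff by (simp add: fps_sum_nth)

lemma fps_cutoff_prod_eq_1:
  "(\<And>i. i \<in> A \<Longrightarrow> fps_cutoff t (f i) = fps_cutoff t 1) \<Longrightarrow> fps_cutoff t (prod f A) = fps_cutoff t 1"
proof (induction A rule: infinite_finite_induct)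
  case (insert x F)
  then have "fps_cutoff t (f x * prod f F) = fps_cutoff t (1 * 1)"
    by (intro fps_cutoff_mult_cong) auto
  then show ?case using insert by simp
qed auto

lemma fps_cutoff_fps_X_power_mult_cong:
  "fps_cutoff t a = fps_cutoff t b \<Longrightarrow> fps_cutoff (e + t) (fps_X ^ e * a) = fps_cutoff (e + t) (fps_X ^ e * b)"
  unfolding fps_cutoff_eq_fps_cutoff_iff by (simp add: fps_X_power_mult_nth)

lemma fps_cutoff_one_minus_fps_X_power:
  "t \<le> e \<Longrightarrow> fps_cutoff t (1 - fps_X ^ e :: 'a::comm_ring_1 fps) = fps_cutoff t 1"
  unfolding fps_cutoff_eq_fps_cutoff_iff by (simp add: fps_X_power_nth)

lemma fps_cutoff_cong_mono:
  "fps_cutoff t a = fps_cutoff t b \<Longrightarrow> s \<le> t \<Longrightarrow> fps_cutoff s a = fps_cutoff s b"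
  unfolding fps_cutoff_eq_fps_cutoff_iff by simp

section \<open>The Jacobi triple product modulo x^(N+1)\<close>

lemma fps_cutoff_prod_one_minus_fps_X_power:
  assumes "\<And>j. j \<in> J \<Longrightarrow> t \<le> r * Suc j"
  shows "fps_cutoff t (\<Prod>j\<in>J. 1 - (fps_X ^ r :: 'a::comm_ring_1 fps) ^ Suc j) = fps_cutoff t 1"
proof (rule fps_cutoff_prod_eq_1)
  fix j assume "j \<in> J"
  then show "fps_cutoff t (1 - (fps_X ^ r :: 'a fps) ^ Suc j) = fps_cutoff t 1"
    unfolding power_mult[symmetric] using assms by (intro fps_cutoff_one_minus_fps_X_power)
qed

text \<open>The q-binomial identity [2N, i] (Q;Q)_i (Q;Q)_h = (Q;Q)_2N with h = 2N - i becomes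
  [2N, i] (Q;Q)_N U = W after cancelling (Q;Q)_h, and U, W are products of factors 1 - Q^j with j > h.\<close>

lemma fps_cutoff_qbinom_mult_q_pochhammer_upper:
  fixes r :: nat
  defines "Q \<equiv> fps_X ^ r :: 'a::idom fps"
  assumes "0 < r" "N \<le> i" "i \<le> 2 * N"
  shows "fps_cutoff (r * (2 * N - i + 1)) (qbinom Q (2 * N) i * q_pochhammer Q N) = fps_cutoff (r * (2 * N - i + 1)) 1"
proof -
  define h where "h = 2 * N - i"
  define t where "t = r * (h + 1)"
  define U where "U = (\<Prod>j\<in>{N..<i}. 1 - Q ^ Suc j)"
  define W where "W = (\<Prod>j\<in>{h..<2 * N}. 1 - Q ^ Suc j)"
  have "q_pochhammer Q h * (qbinom Q (2 * N) i * q_pochhammer Q N * U) = q_pochhammer Q h * W"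
    using qbinom_mult_q_pochhammer[of i "2 * N" Q] q_pochhammer_split[of N i Q]
      q_pochhammer_split[of h "2 * N" Q] assms(3,4)
    unfolding U_def W_def h_def by (simp add: mult_ac)
  moreover have "q_pochhammer Q h \<noteq> 0"
    unfolding Q_def using \<open>0 < r\<close> by (rule q_pochhammer_fps_X_power_neq_0)
  ultimately have UW: "qbinom Q (2 * N) i * q_pochhammer Q N * U = W" by simp
  have cut_U: "fps_cutoff t U = fps_cutoff t 1"
    unfolding U_def Q_def
  proof (rule fps_cutoff_prod_one_minus_fps_X_power)
    fix j assume "j \<in> {N..<i}"
    then show "t \<le> r * Suc j" unfolding t_def h_def using assms(4) by (intro mult_left_mono) auto
  qed
  have cut_W: "fps_cutoff t W = fps_cutoff t 1"
    unfolding W_def Q_def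
  proof (rule fps_cutoff_prod_one_minus_fps_X_power)
    fix j assume "j \<in> {h..<2 * N}"
    then show "t \<le> r * Suc j" unfolding t_def by (intro mult_left_mono) auto
  qed
  have "fps_cutoff t (qbinom Q (2 * N) i * q_pochhammer Q N * 1) =
      fps_cutoff t (qbinom Q (2 * N) i * q_pochhammer Q N * U)"
    using cut_U by (intro fps_cutoff_mult_cong) simp_all
  then show ?thesis using cut_W UW unfolding t_def h_def by simp
qed

lemma fps_cutoff_qbinom_mult_q_pochhammer:
  fixes r :: nat
  defines "Q \<equiv> fps_X ^ r :: 'a::idom fps"
  assumes "0 < r" "i \<le> 2 * N"
  shows "fps_cutoff (r * (min i (2 * N - i) + 1)) (qbinom Q (2 * N) i * q_pochhammer Q N) =
    fps_cutoff (r * (min i (2 * N - i) + 1)) 1"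
proof (cases "N \<le> i")
  case True
  then have "min i (2 * N - i) = 2 * N - i" using assms(3) by simp
  then show ?thesis using fps_cutoff_qbinom_mult_q_pochhammer_upper[OF assms(2) True assms(3)]
    unfolding Q_def by simp
next
  case False
  have "q_pochhammer Q (2 * N) \<noteq> 0"
    unfolding Q_def using assms(2) by (rule q_pochhammer_fps_X_power_neq_0)
  then have "qbinom Q (2 * N) i = qbinom Q (2 * N) (2 * N - i)"
    using qbinom_symmetric assms(3) by metis
  moreover have "N \<le> 2 * N - i" "min i (2 * N - i) = 2 * N - (2 * N - i)" using False assms(3) by simp_all
  ultimately show ?thesis
    using fps_cutoff_qbinom_mult_q_pochhammer_upper[OF assms(2), of N "2 * N - i"]
    unfolding Q_def by simp
qed

lemma sum_lessThan_id_eq_choose_two: "(\<Sum>j<n. j) = n choose 2"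
  by (induction n) (simp_all add: Suc_choose_two numeral_2_eq_2)

lemma double_choose_two: "2 * int (n choose 2) = int n * (int n - 1)"
proof -
  have "even (n * (n - 1))" by auto
  then have "2 * (n choose 2) = n * (n - 1)" by (simp add: choose_two)
  then show ?thesis by (cases n) (simp_all add: algebra_simps flip: of_nat_mult)
qed

text \<open>The exponent of the i-th term of the triple product expansion, with m = i - N in [-N, N].\<close>

definition polygonal_exponent :: "nat \<Rightarrow> nat \<Rightarrow> nat \<Rightarrow> nat" where
  "polygonal_exponent r N i = nat (polygonal (int r) (int i - int N))"

lemma polygonal_exponent_identity:
  assumes "2 \<le> r" "i \<le> 2 * N"
  shows "i + r * (i choose 2) + r * N * (2 * N - i) =
    N + r * (N choose 2) + r * N * N + polygonal_exponent r N i"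
proof -
  have nonneg: "0 \<le> polygonal (int r) (int i - int N)"
    using abs_le_polygonal[of "int r" "int i - int N"] assms(1) by simp
  have "int (2 * N - i) = 2 * int N - int i" using assms(2) by simp
  then have "2 * int (i + r * (i choose 2) + r * N * (2 * N - i)) =
      2 * int i + int r * (2 * int (i choose 2)) + 2 * int r * int N * (2 * int N - int i)"
    unfolding of_nat_add of_nat_mult by (simp add: algebra_simps)
  also have "\<dots> = 2 * int N + int r * (2 * int (N choose 2)) + 2 * int r * int N * int N
      + 2 * polygonal (int r) (int i - int N)"
    unfolding double_choose_two double_polygonal by (simp add: algebra_simps)
  also have "\<dots> = 2 * int (N + r * (N choose 2) + r * N * N + polygonal_exponent r N i)"
    using nonneg unfolding polygonal_exponent_def by (simp add: algebra_simps)
  finally show ?thesis by (simp only: mult_cancel_left of_nat_eq_iff) simp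
qed

lemma prod_lower_half:
  assumes "0 < r"
  shows "(\<Prod>j<N. fps_X ^ (r * N) - fps_X ^ (r * j + 1) :: 'a::comm_ring_1 fps) =
    (-1) ^ N * fps_X ^ (N + r * (N choose 2)) * (\<Prod>j<N. 1 - fps_X ^ (r * j + (r - 1)))"
proof -
  have factor: "(fps_X ^ (r * N) - fps_X ^ (r * j + 1) :: 'a fps) =
      (-1) * fps_X ^ (r * j + 1) * (1 - fps_X ^ (r * (N - Suc j) + (r - 1)))" if j: "j < N" for j
  proof -
    obtain d where N: "N = Suc (j + d)" using less_imp_Suc_add[OF j] by blast
    have "r * j + 1 + (r * (N - Suc j) + (r - 1)) = r * N"
      using assms unfolding N by (simp add: algebra_simps)
    then have "fps_X ^ (r * j + 1) * fps_X ^ (r * (N - Suc j) + (r - 1)) = (fps_X ^ (r * N) :: 'a fps)"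
      by (simp only: power_add[symmetric])
    then show ?thesis by (simp add: algebra_simps)
  qed
  have "(\<Prod>j<N. fps_X ^ (r * N) - fps_X ^ (r * j + 1) :: 'a fps) =
      (\<Prod>j<N. (-1) * fps_X ^ (r * j + 1)) * (\<Prod>j<N. 1 - fps_X ^ (r * (N - Suc j) + (r - 1)))"
    unfolding prod.distrib[symmetric] by (intro prod.cong refl) (rule factor, simp)
  also have "(\<Prod>j<N. 1 - fps_X ^ (r * (N - Suc j) + (r - 1)) :: 'a fps) =
      (\<Prod>j<N. 1 - fps_X ^ (r * j + (r - 1)))"
    by (rule prod.nat_diff_reindex)
  also have "(\<Prod>j<N. (-1) * fps_X ^ (r * j + 1) :: 'a fps) = (-1) ^ N * fps_X ^ (\<Sum>j<N. r * j + 1)"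
    by (simp only: prod.distrib prod_constant card_lessThan power_sum)
  also have "(\<Sum>j<N. r * j + 1) = N + r * (N choose 2)"
    unfolding sum.distrib sum_distrib_left[symmetric] sum_lessThan_id_eq_choose_two by simp
  finally show ?thesis .
qed

lemma prod_upper_half:
  "(\<Prod>j\<in>{N..<2 * N}. fps_X ^ (r * N) - fps_X ^ (r * j + 1) :: 'a::comm_ring_1 fps) =
    fps_X ^ (r * N * N) * (\<Prod>j<N. 1 - fps_X ^ (r * j + 1))"
proof -
  have "(\<Prod>j\<in>{N..<2 * N}. fps_X ^ (r * N) - fps_X ^ (r * j + 1) :: 'a fps) =
      (\<Prod>j<N. fps_X ^ (r * N) - fps_X ^ (r * (j + N) + 1))"
    using prod.shift_bounds_nat_ivl[of "\<lambda>j. fps_X ^ (r * N) - fps_X ^ (r * j + 1) :: 'a fps" 0 N N]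
    by (simp add: mult_2 atLeast0LessThan)
  also have "\<dots> = (\<Prod>j<N. fps_X ^ (r * N) * (1 - fps_X ^ (r * j + 1)))"
    by (intro prod.cong refl) (simp add: algebra_simps flip: power_add)
  finally show ?thesis by (simp add: prod.distrib power_mult)
qed

lemma prod_shifted_powers:
  assumes "0 < r"
  shows "(\<Prod>j<2 * N. (fps_X ^ r) ^ N + (- fps_X) * (fps_X ^ r) ^ j :: 'a::comm_ring_1 fps) =
    (-1) ^ N * fps_X ^ (N + r * (N choose 2) + r * N * N) *
    (\<Prod>j<N. (1 - fps_X ^ (r * j + 1)) * (1 - fps_X ^ (r * j + (r - 1))))"
proof -
  have "(\<Prod>j<2 * N. (fps_X ^ r) ^ N + (- fps_X) * (fps_X ^ r) ^ j :: 'a fps) =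
      (\<Prod>j<2 * N. fps_X ^ (r * N) - fps_X ^ (r * j + 1))"
    by (intro prod.cong refl) (simp add: power_add power_mult)
  also have "\<dots> = (\<Prod>j<N. fps_X ^ (r * N) - fps_X ^ (r * j + 1)) *
      (\<Prod>j\<in>{N..<2 * N}. fps_X ^ (r * N) - fps_X ^ (r * j + 1))"
    by (simp add: atLeast0LessThan[symmetric] prod.atLeastLessThan_concat)
  also have "\<dots> = (-1) ^ N * fps_X ^ (N + r * (N choose 2) + r * N * N) *
      (\<Prod>j<N. (1 - fps_X ^ (r * j + 1)) * (1 - fps_X ^ (r * j + (r - 1))))"
    unfolding prod_lower_half[OF assms] prod_upper_half
    unfolding prod.distrib power_add by (simp only: ac_simps)
  finally show ?thesis .
qed

theorem finite_jacobi_triple_product: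
  assumes "2 \<le> r"
  shows "(\<Prod>j<N. (1 - fps_X ^ (r * j + 1)) * (1 - fps_X ^ (r * j + (r - 1))) :: int fps) =
    (\<Sum>i\<le>2 * N. (-1) ^ (i + N) * fps_X ^ polygonal_exponent r N i * qbinom (fps_X ^ r) (2 * N) i)"
    (is "?P = ?S")
proof -
  let ?X = "fps_X :: int fps"
  let ?Q = "?X ^ r"
  define c where "c = N + r * (N choose 2) + r * N * N"
  have lhs: "(\<Prod>j<2 * N. ?Q ^ N + (- ?X) * ?Q ^ j) = (-1) ^ N * ?X ^ c * ?P"
    unfolding c_def using assms by (intro prod_shifted_powers) simp
  have rhs: "qbinom ?Q (2 * N) i * ?Q ^ (i choose 2) * (- ?X) ^ i * (?Q ^ N) ^ (2 * N - i) =
      ?X ^ c * ((-1) ^ i * ?X ^ polygonal_exponent r N i * qbinom ?Q (2 * N) i)" if "i \<le> 2 * N" for i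
  proof -
    have "?Q ^ (i choose 2) = ?X ^ (r * (i choose 2))" "(?Q ^ N) ^ (2 * N - i) = ?X ^ (r * N * (2 * N - i))"
      by (simp_all only: power_mult)
    then have "qbinom ?Q (2 * N) i * ?Q ^ (i choose 2) * (- ?X) ^ i * (?Q ^ N) ^ (2 * N - i) =
        (-1) ^ i * (?X ^ i * ?X ^ (r * (i choose 2)) * ?X ^ (r * N * (2 * N - i))) * qbinom ?Q (2 * N) i"
      unfolding power_minus[of ?X] by (simp only: ac_simps)
    also have "?X ^ i * ?X ^ (r * (i choose 2)) * ?X ^ (r * N * (2 * N - i)) = ?X ^ c * ?X ^ polygonal_exponent r N i"
      unfolding power_add[symmetric] c_def polygonal_exponent_identity[OF assms that] ..
    finally show ?thesis by (simp only: ac_simps)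
  qed
  have "?X ^ c * ((-1) ^ N * ?P) = (\<Prod>j<2 * N. ?Q ^ N + (- ?X) * ?Q ^ j)"
    unfolding lhs by (simp only: ac_simps)
  also have "\<dots> = (\<Sum>i\<le>2 * N. qbinom ?Q (2 * N) i * ?Q ^ (i choose 2) * (- ?X) ^ i * (?Q ^ N) ^ (2 * N - i))"
    by (rule q_binomial_theorem)
  also have "\<dots> = ?X ^ c * (\<Sum>i\<le>2 * N. (-1) ^ i * ?X ^ polygonal_exponent r N i * qbinom ?Q (2 * N) i)"
    unfolding sum_distrib_left by (intro sum.cong refl) (simp add: rhs)
  finally have "?X ^ c * ((-1) ^ N * ?P) =
      ?X ^ c * (\<Sum>i\<le>2 * N. (-1) ^ i * ?X ^ polygonal_exponent r N i * qbinom ?Q (2 * N) i)" .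
  then have signed: "(-1) ^ N * ?P = (\<Sum>i\<le>2 * N. (-1) ^ i * ?X ^ polygonal_exponent r N i * qbinom ?Q (2 * N) i)"
    by simp
  have "?P = ((-1) ^ N * (-1) ^ N) * ?P"
    by (simp flip: power_mult_distrib)
  also have "\<dots> = (-1) ^ N * (\<Sum>i\<le>2 * N. (-1) ^ i * ?X ^ polygonal_exponent r N i * qbinom ?Q (2 * N) i)"
    unfolding mult.assoc signed ..
  also have "\<dots> = ?S"
    unfolding sum_distrib_left by (intro sum.cong refl) (simp only: power_add ac_simps)
  finally show ?thesis .
qed

definition signed_polygonal_series :: "nat \<Rightarrow> int fps" where
  "signed_polygonal_series r = Abs_fps (\<lambda>d. if int d \<in> range (polygonal (int r)) then (-1) ^ d else 0)"

lemma polygonal_exponent_eq_iff: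
  "2 \<le> r \<Longrightarrow> polygonal_exponent r N i = d \<longleftrightarrow> int d = polygonal (int r) (int i - int N)"
  using abs_le_polygonal[of "int r" "int i - int N"] unfolding polygonal_exponent_def by auto

lemma polygonal_exponent_eq_polygonal_iff:
  assumes "3 \<le> r" "int d = polygonal (int r) m"
  shows "polygonal_exponent r N i = d \<longleftrightarrow> int i = int N + m"
proof -
  have "polygonal_exponent r N i = d \<longleftrightarrow> polygonal (int r) m = polygonal (int r) (int i - int N)"
    using polygonal_exponent_eq_iff[of r N i d] assms by simp
  also have "\<dots> \<longleftrightarrow> m = int i - int N"
    using inj_polygonal[of "int r"] assms(1) by (simp add: inj_eq)
  finally show ?thesis by auto
qed

lemma abs_le_polygonal_exponent:
  assumes "2 \<le> r" shows "\<bar>int i - int N\<bar> \<le> int (polygonal_exponent r N i)"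
proof -
  have "\<bar>int i - int N\<bar> \<le> polygonal (int r) (int i - int N)"
    using abs_le_polygonal assms by simp
  moreover from this have "0 \<le> polygonal (int r) (int i - int N)" by (rule order_trans[OF abs_ge_zero])
  ultimately show ?thesis unfolding polygonal_exponent_def by simp
qed

lemma fps_cutoff_jacobi_term:
  assumes "2 \<le> r" "i \<le> 2 * N"
  shows "fps_cutoff (N + 1) (fps_X ^ polygonal_exponent r N i * (qbinom (fps_X ^ r) (2 * N) i * q_pochhammer (fps_X ^ r) N)) =
    fps_cutoff (N + 1) (fps_X ^ polygonal_exponent r N i :: int fps)"
proof -
  define e h where "e = polygonal_exponent r N i" and "h = min i (2 * N - i)"
  have cut: "fps_cutoff (e + r * (h + 1)) (fps_X ^ e * (qbinom (fps_X ^ r) (2 * N) i * q_pochhammer (fps_X ^ r) N)) =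
      fps_cutoff (e + r * (h + 1)) (fps_X ^ e * (1 :: int fps))"
    unfolding h_def using assms
    by (intro fps_cutoff_fps_X_power_mult_cong fps_cutoff_qbinom_mult_q_pochhammer) simp_all
  have "N + 1 \<le> e + r * (h + 1)"
  proof -
    have "\<bar>int i - int N\<bar> \<le> int e"
      unfolding e_def using assms(1) by (rule abs_le_polygonal_exponent)
    moreover have "int h = int N - \<bar>int i - int N\<bar>" using assms(2) unfolding h_def by (auto simp: min_def)
    ultimately have "N \<le> e + h" by linarith
    have "1 * (h + 1) \<le> r * (h + 1)" using assms(1) by (intro mult_le_mono1) simp
    then have "e + 1 * (h + 1) \<le> e + r * (h + 1)" by (rule add_left_mono)
    moreover have "N + 1 \<le> e + 1 * (h + 1)" using \<open>N \<le> e + h\<close> by simp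
    ultimately show ?thesis by (rule order_trans[rotated])
  qed
  from fps_cutoff_cong_mono[OF cut this] show ?thesis unfolding e_def by simp
qed

lemma fps_neg_one_power: "(-1 :: 'a::comm_ring_1 fps) ^ n = fps_const ((-1) ^ n)"
  by (simp flip: fps_const_neg fps_const_power)

lemma fps_nth_signed_polygonal_sum:
  assumes "3 \<le> r" "even r" "d \<le> N"
  shows "fps_nth (\<Sum>i\<le>2 * N. (-1) ^ (i + N) * fps_X ^ polygonal_exponent r N i :: int fps) d =
    fps_nth (signed_polygonal_series r) d"
proof -
  have "fps_nth (\<Sum>i\<le>2 * N. (-1) ^ (i + N) * fps_X ^ polygonal_exponent r N i :: int fps) d =
      (\<Sum>i\<le>2 * N. if polygonal_exponent r N i = d then (-1) ^ (i + N) else 0)"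
    unfolding fps_sum_nth by (intro sum.cong refl) (simp add: fps_neg_one_power fps_X_power_nth)
  also have "\<dots> = fps_nth (signed_polygonal_series r) d"
  proof (cases "int d \<in> range (polygonal (int r))")
    case True
    then obtain m where m: "int d = polygonal (int r) m" by auto
    have "\<bar>m\<bar> \<le> int N" using abs_le_polygonal[of "int r" m] assms m by simp
    define i0 where "i0 = nat (int N + m)"
    have i0: "int i0 = int N + m" "i0 \<le> 2 * N" using \<open>\<bar>m\<bar> \<le> int N\<close> unfolding i0_def by auto
    have "polygonal_exponent r N i = d \<longleftrightarrow> i = i0" for i
      using polygonal_exponent_eq_polygonal_iff[OF assms(1) m, of N i] i0(1) by auto
    then have "(\<Sum>i\<le>2 * N. if polygonal_exponent r N i = d then (-1) ^ (i + N) else 0) = ((-1) ^ (i0 + N) :: int)"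
      using i0(2) by simp
    also have "\<dots> = (-1) ^ d"
    proof -
      have "int (i0 + N) = m + 2 * int N" using i0(1) by simp
      then have "even (int (i0 + N)) \<longleftrightarrow> even m" by simp
      then have "even (i0 + N) \<longleftrightarrow> even m" by simp
      also have "\<dots> \<longleftrightarrow> even (int d)" using even_polygonal_iff[of "int r" m] assms(2) m by simp
      also have "\<dots> \<longleftrightarrow> even d" by simp
      finally show ?thesis by (simp add: minus_one_power_iff)
    qed
    finally show ?thesis unfolding signed_polygonal_series_def using True by simp
  next
    case False
    then have "polygonal_exponent r N i \<noteq> d" for i
      using polygonal_exponent_eq_iff[of r N i d] assms(1) by auto
    then show ?thesis unfolding signed_polygonal_series_def using False by simp
  qed
  finally show ?thesis .
qed

theorem truncated_jacobi_triple_product: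
  assumes "3 \<le> r" "even r"
  shows "fps_cutoff (N + 1)
      (\<Prod>j<N. (1 - fps_X ^ (r * j + 1)) * (1 - fps_X ^ (r * j + (r - 1))) * (1 - fps_X ^ (r * j + r))) =
    fps_cutoff (N + 1) (signed_polygonal_series r)"
proof -
  have "2 \<le> r" using assms(1) by simp
  let ?X = "fps_X :: int fps"
  let ?e = "polygonal_exponent r N"
  let ?B = "\<lambda>i. qbinom (?X ^ r) (2 * N) i * q_pochhammer (?X ^ r) N"
  have "(\<Prod>j<N. (1 - ?X ^ (r * j + 1)) * (1 - ?X ^ (r * j + (r - 1))) * (1 - ?X ^ (r * j + r))) =
      (\<Prod>j<N. (1 - ?X ^ (r * j + 1)) * (1 - ?X ^ (r * j + (r - 1)))) * q_pochhammer (?X ^ r) N"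
    unfolding q_pochhammer_def prod.distrib[symmetric]
    by (intro prod.cong refl) (simp only: power_mult[symmetric] mult_Suc_right add.commute)
  also have "\<dots> = (\<Sum>i\<le>2 * N. (-1) ^ (i + N) * (?X ^ ?e i * ?B i))"
    unfolding finite_jacobi_triple_product[OF \<open>2 \<le> r\<close>] sum_distrib_right
    by (simp only: mult.assoc)
  finally have "fps_cutoff (N + 1)
      (\<Prod>j<N. (1 - ?X ^ (r * j + 1)) * (1 - ?X ^ (r * j + (r - 1))) * (1 - ?X ^ (r * j + r))) =
      fps_cutoff (N + 1) (\<Sum>i\<le>2 * N. (-1) ^ (i + N) * (?X ^ ?e i * ?B i))" by simp
  also have "\<dots> = fps_cutoff (N + 1) (\<Sum>i\<le>2 * N. (-1) ^ (i + N) * ?X ^ ?e i)"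
    using assms(1) by (intro fps_cutoff_sum_cong fps_cutoff_mult_cong fps_cutoff_jacobi_term) simp_all
  also have "\<dots> = fps_cutoff (N + 1) (signed_polygonal_series r)"
    unfolding fps_cutoff_eq_fps_cutoff_iff using fps_nth_signed_polygonal_sum[OF assms] by simp
  finally show ?thesis .
qed

section \<open>The set S_k\<close>

lemma mult_add_eq_mult_add_iff:
  fixes r :: nat
  assumes "c \<in> {1..r}" "c' \<in> {1..r}"
  shows "r * j + c = r * j' + c' \<longleftrightarrow> j = j' \<and> c = c'"
proof
  assume eq: "r * j + c = r * j' + c'"
  define d d' where "d = c - 1" and "d' = c' - 1"
  have d: "d < r" "d' < r" "c = d + 1" "c' = d' + 1" using assms unfolding d_def d'_def by auto
  have "(d + r * j) div r = j" "(d + r * j) mod r = d" "(d' + r * j') div r = j'" "(d' + r * j') mod r = d'"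
    using d by simp_all
  moreover have "d + r * j = d' + r * j'" using eq d by simp
  ultimately show "j = j' \<and> c = c'" using d by metis
qed simp

lemma Sset_le_iff:
  assumes "r = k - 2" "3 \<le> r"
  shows "s \<in> Sset k \<and> s \<le> r * N \<longleftrightarrow> (\<exists>j<N. \<exists>c\<in>{1, r - 1, r}. s = r * j + c)"
proof
  assume s: "s \<in> Sset k \<and> s \<le> r * N"
  define j c where "j = (s - 1) div r" and "c = (s - 1) mod r + 1"
  have "0 < s" using s unfolding Sset_def by simp
  then have s_eq: "s = r * j + c" unfolding j_def c_def by simp
  have c: "1 \<le> c" "c \<le> r" using assms(2) unfolding c_def by (simp_all add: Suc_le_eq)
  have mods: "s mod r = c mod r" "(s + 1) mod r = (c + 1) mod r"
    unfolding s_eq by (simp_all add: add.assoc)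
  have "c \<in> {1, r - 1, r}"
  proof (rule ccontr)
    assume "c \<notin> {1, r - 1, r}"
    then have "1 < c" "c + 1 < r" using c by auto
    then have "c mod r = c" "(c + 1) mod r = c + 1" by simp_all
    then show False using s mods \<open>1 < c\<close> unfolding Sset_def assms(1)[symmetric] by auto
  qed
  moreover have "j < N"
  proof -
    have "r * j < r * N" using s s_eq c by linarith
    then show ?thesis by simp
  qed
  ultimately show "\<exists>j<N. \<exists>c\<in>{1, r - 1, r}. s = r * j + c" using s_eq by blast
next
  assume "\<exists>j<N. \<exists>c\<in>{1, r - 1, r}. s = r * j + c"
  then obtain j c where j: "j < N" and c: "c \<in> {1, r - 1, r}" and s_eq: "s = r * j + c" by blast
  have "r * j + c \<le> r * (j + 1)" using c assms(2) by auto
  also have "\<dots> \<le> r * N" using j by (intro mult_le_mono2) simp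
  finally have "s \<le> r * N" unfolding s_eq .
  moreover have "s mod r = 1 \<or> (s + 1) mod r = 0 \<or> s mod r = 0"
    using c assms(2) unfolding s_eq by (auto simp: add.assoc)
  moreover have "0 < s" using c assms(2) unfolding s_eq by auto
  ultimately show "s \<in> Sset k \<and> s \<le> r * N" unfolding Sset_def assms(1)[symmetric] by auto
qed

lemma prod_Sset_le:
  assumes "r = k - 2" "3 \<le> r"
  shows "(\<Prod>s\<in>{s \<in> Sset k. s \<le> r * N}. 1 - fps_X ^ s :: int fps) =
    (\<Prod>j<N. (1 - fps_X ^ (r * j + 1)) * (1 - fps_X ^ (r * j + (r - 1))) * (1 - fps_X ^ (r * j + r)))"
proof -
  let ?C = "{1, r - 1, r}"
  let ?f = "\<lambda>(j, c). r * j + c"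
  have image: "{s \<in> Sset k. s \<le> r * N} = ?f ` ({..<N} \<times> ?C)"
  proof (intro set_eqI iffI)
    fix s assume "s \<in> {s \<in> Sset k. s \<le> r * N}"
    then have "\<exists>j<N. \<exists>c\<in>?C. s = r * j + c" by (intro Sset_le_iff[OF assms, THEN iffD1]) simp
    then obtain j c where "j < N" "c \<in> ?C" "s = r * j + c" by blast
    then have "(j, c) \<in> {..<N} \<times> ?C" "s = ?f (j, c)" by simp_all
    then show "s \<in> ?f ` ({..<N} \<times> ?C)" by (rule rev_image_eqI)
  next
    fix s assume "s \<in> ?f ` ({..<N} \<times> ?C)"
    then obtain x where x: "x \<in> {..<N} \<times> ?C" "s = ?f x" by (rule imageE)
    then have "\<exists>j<N. \<exists>c\<in>?C. s = r * j + c" by (intro exI[of _ "fst x"] conjI bexI[of _ "snd x"]) auto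
    then show "s \<in> {s \<in> Sset k. s \<le> r * N}" using Sset_le_iff[OF assms] by simp
  qed
  have inj: "inj_on ?f ({..<N} \<times> ?C)"
  proof (rule inj_onI)
    fix x y assume "x \<in> {..<N} \<times> ?C" "y \<in> {..<N} \<times> ?C" "?f x = ?f y"
    moreover have "?C \<subseteq> {1..r}" using assms(2) by auto
    ultimately show "x = y"
      using mult_add_eq_mult_add_iff[of "snd x" r "snd y" "fst x" "fst y"] by (auto simp: case_prod_beta)
  qed
  have "(\<Prod>s\<in>{s \<in> Sset k. s \<le> r * N}. 1 - fps_X ^ s :: int fps) =
      (\<Prod>(j, c)\<in>{..<N} \<times> ?C. 1 - fps_X ^ (r * j + c))"
    by (rule prod.reindex_cong[OF inj image]) (simp split: prod.split)
  also have "\<dots> = (\<Prod>j<N. \<Prod>c\<in>?C. 1 - fps_X ^ (r * j + c))"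
    by (rule prod.cartesian_product[symmetric])
  also have "\<dots> = (\<Prod>j<N. (1 - fps_X ^ (r * j + 1)) * (1 - fps_X ^ (r * j + (r - 1))) * (1 - fps_X ^ (r * j + r)))"
    using assms(2) by (intro prod.cong refl) (simp add: mult_ac)
  finally show ?thesis .
qed

lemma signed_polygonal_series_mult_part_count:
  assumes "6 \<le> k" "even k"
  shows "signed_polygonal_series (k - 2) * Abs_fps (\<lambda>n. int (part_count (Sset k) n)) = 1"
proof (rule fps_ext)
  fix n
  define r where "r = k - 2"
  define A where "A = {s \<in> Sset k. s \<le> r * n}"
  have r: "3 \<le> r" "even r" using assms unfolding r_def by auto
  have "0 \<notin> Sset k" by (simp add: Sset_def)
  have "finite A" unfolding A_def by (rule finite_subset[of _ "{..r * n}"]) auto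
  have "0 \<notin> A" unfolding A_def using \<open>0 \<notin> Sset k\<close> by simp
  have "fps_cutoff (n + 1) (\<Prod>s\<in>A. 1 - fps_X ^ s) = fps_cutoff (n + 1) (signed_polygonal_series r)"
    unfolding A_def prod_Sset_le[OF r_def r(1)] by (rule truncated_jacobi_triple_product[OF r])
  moreover have "fps_cutoff (n + 1) (partition_fps A) =
      fps_cutoff (n + 1) (Abs_fps (\<lambda>n. int (part_count (Sset k) n)))"
  proof -
    have "n \<le> r * n" using r by simp
    have "part_count (Sset k) d = card (partitions_in A d)" if "d < n + 1" for d
    proof -
      have "d \<le> r * n" using that \<open>n \<le> r * n\<close> by linarith
      then show ?thesis unfolding A_def by (rule part_count_eq_card_partitions_in[OF \<open>0 \<notin> Sset k\<close>])
    qed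
    then show ?thesis unfolding fps_cutoff_eq_fps_cutoff_iff partition_fps_def by simp
  qed
  ultimately have "fps_cutoff (n + 1) ((\<Prod>s\<in>A. 1 - fps_X ^ s) * partition_fps A) =
      fps_cutoff (n + 1) (signed_polygonal_series r * Abs_fps (\<lambda>n. int (part_count (Sset k) n)))"
    by (rule fps_cutoff_mult_cong)
  then show "fps_nth (signed_polygonal_series (k - 2) * Abs_fps (\<lambda>n. int (part_count (Sset k) n))) n = fps_nth 1 n"
    unfolding partition_fps_inverse[OF \<open>finite A\<close> \<open>0 \<notin> A\<close>] fps_cutoff_eq_fps_cutoff_iff r_def by simp
qed

lemma signed_polygonal_series_eq_gonal:
  assumes "2 \<le> k"
  shows "signed_polygonal_series (k - 2) = Abs_fps (\<lambda>n. if n = 0 \<or> n \<in> gonal k then (-1) ^ n else 0)"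
proof -
  have "int n \<in> range (polygonal (int k - 2)) \<longleftrightarrow> n = 0 \<or> n \<in> gonal k" for n
  proof (cases "n = 0")
    case True
    have "int 0 = polygonal (int k - 2) 0" by (simp add: polygonal_def)
    then have "int 0 \<in> range (polygonal (int k - 2))" by (rule range_eqI)
    then show ?thesis using True by simp
  qed (simp add: gonal_eq_polygonal)
  then show ?thesis unfolding signed_polygonal_series_def using assms by (simp add: of_nat_diff)
qed

theorem theorem1:
  fixes k n :: nat
  assumes "k \<ge> 6" and "even k"
  shows "int (part_count (Sset k) n) =
         (-1) ^ n * (\<Sum>c\<in>compositions (gonal k) n. (-1 :: int) ^ length c)"
proof -
  have "2 \<le> k" using assms(1) by simp
  define D where "D = signed_polygonal_series (k - 2)"
  define U where "U = Abs_fps (\<lambda>n. int (part_count (Sset k) n))"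
  define V where "V = Abs_fps (\<lambda>n. (-1) ^ n * signed_compositions (gonal k) n)"
  have DU: "D * U = 1"
    unfolding D_def U_def using assms by (rule signed_polygonal_series_mult_part_count)
  have DV: "D * V = 1"
    unfolding D_def V_def signed_polygonal_series_eq_gonal[OF \<open>2 \<le> k\<close>]
    by (rule signed_compositions_fps_inverse)
  have "U = (D * U) * V" unfolding mult.assoc mult.left_commute[of D U] DV by simp
  then have "U = V" unfolding DU by simp
  then have "fps_nth U n = fps_nth V n" by simp
  then show ?thesis unfolding U_def V_def signed_compositions_def by simp
qed

end
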